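(* Let $t\ge2$ and $v\ge2$ be integers. Then an optimum $(d,t)$-CDA$((d+1)v^t;2t,v)$ exists for every positive integer $d$ with $d+1\le v$.
   Context: Consecutive $t$-way interaction in an $N\times k$ array $A=(a_{ij})$ over a $v$-set $V$: $T=\{(i,x_i),\dots,(i+t-1,x_{i+t-1})\}$, $1\le i\le k-t+1$, $x_r\in V$; $\rho(A,T)=\{r: a_{r,j}=x_j\ \forall (j,x_j)\in T\}$, $\rho(A,\mathcal T)=\bigcup_{T\in\mathcal T}\rho(A,T)$. A $(d,t)$-CDA$(N;k,v)$ is an $N\times k$ array over $V$ in which every $t$ consecutive columns contain every $t$-tuple at least once, and such that for every set $\mathcal T$ of exactly $d$ distinct consecutive $t$-way interactions and every consecutive $t$-way interaction $T$: $\rho(A,T)\subseteq\rho(A,\mathcal T)$ iff $T\in\mathcal T$. It is optimum if $N=(d+1)v^t$. *)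

theory Defs
  imports Main
begin

text \<open>An N x k array over a v-set V is a function A :: nat => nat => 'a whose entries
  A r j for r < N, j < k lie in V (rows and columns are 0-indexed).
  A consecutive t-way interaction is a pair (i, xs) where i is the starting column
  (0-indexed, i + t <= k) and xs is a list of length t over V; it stands for
  {(i, xs!0), ..., (i+t-1, xs!(t-1))}.\<close>

definition is_array :: "nat \<Rightarrow> nat \<Rightarrow> 'a set \<Rightarrow> (nat \<Rightarrow> nat \<Rightarrow> 'a) \<Rightarrow> bool" where
  "is_array N k V A \<longleftrightarrow> (\<forall>r<N. \<forall>j<k. A r j \<in> V)"

definition cons_interactions :: "nat \<Rightarrow> nat \<Rightarrow> 'a set \<Rightarrow> (nat \<times> 'a list) set" where
  "cons_interactions k t V = {(i, xs). i + t \<le> k \<and> length xs = t \<and> set xs \<subseteq> V}"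

definition rho :: "nat \<Rightarrow> (nat \<Rightarrow> nat \<Rightarrow> 'a) \<Rightarrow> nat \<times> 'a list \<Rightarrow> nat set" where
  "rho N A T = {r. r < N \<and> (\<forall>j<length (snd T). A r (fst T + j) = snd T ! j)}"

definition rho_set :: "nat \<Rightarrow> (nat \<Rightarrow> nat \<Rightarrow> 'a) \<Rightarrow> (nat \<times> 'a list) set \<Rightarrow> nat set" where
  "rho_set N A TT = (\<Union>T\<in>TT. rho N A T)"

definition is_CDA :: "nat \<Rightarrow> nat \<Rightarrow> nat \<Rightarrow> nat \<Rightarrow> 'a set \<Rightarrow> (nat \<Rightarrow> nat \<Rightarrow> 'a) \<Rightarrow> bool" where
  "is_CDA d t N k V A \<longleftrightarrow>
     is_array N k V A \<and>
     (\<forall>T\<in>cons_interactions k t V. rho N A T \<noteq> {}) \<and>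
     (\<forall>TT. TT \<subseteq> cons_interactions k t V \<longrightarrow> finite TT \<longrightarrow> card TT = d \<longrightarrow>
        (\<forall>T\<in>cons_interactions k t V. rho N A T \<subseteq> rho_set N A TT \<longleftrightarrow> T \<in> TT))"

end

theory Submission
  imports Defs "HOL-Number_Theory.Cong"
begin

text \<open>Label the rows by pairs (s, x) with s \<le> d and x a word of length t over {0..<v}, and let
  row (s, x) be (x, x + (s, ..., s)) mod v. For every shift s < v exactly one x covers a given
  interaction, so each interaction is covered by at least d + 1 rows. Two distinct windows of
  length t inside 2t columns jointly span t + 1 consecutive columns; these contain some column
  j together with j + t, which fixes s, and one of q, q + t for every q < t, which then fixes x.
  Hence distinct interactions share at most one row, and d interactions can cover at most d of
  the at least d + 1 rows of any further interaction.\<close>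

definition covers :: "(nat \<Rightarrow> 'a) \<Rightarrow> nat \<times> 'a list \<Rightarrow> bool" where
  "covers row T \<longleftrightarrow> (\<forall>j<length (snd T). row (fst T + j) = snd T ! j)"

lemma rho_eq_covers: "rho N A T = {r. r < N \<and> covers (A r) T}"
  by (simp add: rho_def covers_def)

lemma covers_agree:
  assumes "covers row (i, xs)" "covers row' (i, xs)" "i \<le> j" "j < i + length xs"
  shows "row j = row' j"
proof -
  have "j - i < length xs" using assms(3,4) by simp
  then have "row (i + (j - i)) = row' (i + (j - i))"
    using assms(1,2) unfolding covers_def by simp
  then show ?thesis using assms(3) by simp
qed

lemma covers_same_start_eq:
  assumes "covers row (i, xs)" "covers row (i, xs')" "length xs = length xs'"
  shows "xs = xs'"
  using assms by (intro nth_equalityI) (auto simp: covers_def)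

lemma card_le_card_if_subset_UN_overlaps_le_1:
  assumes "finite I" "S \<subseteq> (\<Union>i\<in>I. R i)" "\<And>i. i \<in> I \<Longrightarrow> card (S \<inter> R i) \<le> 1"
  shows "card S \<le> card I"
proof -
  have "S = (\<Union>i\<in>I. S \<inter> R i)" using assms(2) by blast
  then have "card S \<le> (\<Sum>i\<in>I. card (S \<inter> R i))"
    by (metis card_UN_le[OF assms(1)])
  also have "\<dots> \<le> (\<Sum>i\<in>I. 1)" using assms(3) by (rule sum_mono)
  finally show ?thesis by simp
qed

lemma is_CDA_if_covered_often_and_overlaps_le_1:
  assumes "is_array N k V A"
    and often: "\<And>T. T \<in> cons_interactions k t V \<Longrightarrow> d < card (rho N A T)"
    and overlap: "\<And>T T'. T \<in> cons_interactions k t V \<Longrightarrow> T' \<in> cons_interactions k t V \<Longrightarrow>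
      T \<noteq> T' \<Longrightarrow> card (rho N A T \<inter> rho N A T') \<le> 1"
  shows "is_CDA d t N k V A"
  unfolding is_CDA_def
proof (intro conjI ballI allI impI iffI)
  fix T assume "T \<in> cons_interactions k t V"
  then show "rho N A T \<noteq> {}" using often by fastforce
next
  fix TT T
  assume TT: "TT \<subseteq> cons_interactions k t V" "finite TT" "card TT = d"
    and T: "T \<in> cons_interactions k t V" and sub: "rho N A T \<subseteq> rho_set N A TT"
  show "T \<in> TT"
  proof (rule ccontr)
    assume "T \<notin> TT"
    then have "card (rho N A T \<inter> rho N A T') \<le> 1" if "T' \<in> TT" for T'
      using overlap[OF T] TT(1) that by blast
    then have "card (rho N A T) \<le> d"
      using card_le_card_if_subset_UN_overlaps_le_1[OF TT(2)] sub TT(3)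
      unfolding rho_set_def by blast
    then show False using often[OF T] by simp
  qed
qed (use assms(1) in \<open>auto simp: rho_set_def\<close>)

lemma is_CDA_from_labelled_rows:
  fixes R :: "'p \<Rightarrow> nat \<Rightarrow> 'a"
  assumes "finite P" "card P = N"
    and entries: "\<And>p j. p \<in> P \<Longrightarrow> j < k \<Longrightarrow> R p j \<in> V"
    and often: "\<And>T. T \<in> cons_interactions k t V \<Longrightarrow> d < card {p \<in> P. covers (R p) T}"
    and overlap: "\<And>T T'. T \<in> cons_interactions k t V \<Longrightarrow> T' \<in> cons_interactions k t V \<Longrightarrow>
      T \<noteq> T' \<Longrightarrow> card {p \<in> P. covers (R p) T \<and> covers (R p) T'} \<le> 1"
  shows "\<exists>A. is_CDA d t N k V A"
proof -
  obtain f where f: "bij_betw f {0..<N} P"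
    using finite_same_card_bij[of "{0..<N}" P] assms(1,2) by auto
  define A where "A r = R (f r)" for r
  have card_rows: "card {r \<in> {0..<N}. Q (f r)} = card {p \<in> P. Q p}" for Q
    by (rule bij_betw_same_card, rule bij_betw_Collect[OF f]) simp
  have rho_A: "rho N A T = {r \<in> {0..<N}. covers (R (f r)) T}" for T
    by (auto simp: rho_eq_covers A_def)
  have "is_array N k V A"
    using entries bij_betwE[OF f] by (auto simp: is_array_def A_def)
  moreover have "d < card (rho N A T)" if "T \<in> cons_interactions k t V" for T
    using often[OF that] card_rows[of "\<lambda>p. covers (R p) T"] by (simp add: rho_A)
  moreover have "card (rho N A T \<inter> rho N A T') \<le> 1"
    if "T \<in> cons_interactions k t V" "T' \<in> cons_interactions k t V" "T \<noteq> T'" for T T'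
  proof -
    have "rho N A T \<inter> rho N A T' = {r \<in> {0..<N}. covers (R (f r)) T \<and> covers (R (f r)) T'}"
      by (auto simp: rho_A)
    then show ?thesis
      using overlap[OF that] card_rows[of "\<lambda>p. covers (R p) T \<and> covers (R p) T'"] by simp
  qed
  ultimately show ?thesis using is_CDA_if_covered_often_and_overlaps_le_1 by blast
qed

definition words :: "nat \<Rightarrow> nat \<Rightarrow> nat list set" where
  "words v t = {xs. set xs \<subseteq> {0..<v} \<and> length xs = t}"

definition shifted_row :: "nat \<Rightarrow> nat \<Rightarrow> nat \<times> nat list \<Rightarrow> nat \<Rightarrow> nat" where
  "shifted_row v t p j = (snd p ! (j mod t) + fst p * (j div t)) mod v"

lemma finite_words: "finite (words v t)"
  unfolding words_def by (rule finite_lists_length_eq) simp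

lemma card_words: "card (words v t) = v ^ t"
  unfolding words_def by (subst card_lists_length_eq) simp_all

lemma words_nth_less: "xs \<in> words v t \<Longrightarrow> j < t \<Longrightarrow> xs ! j < v"
  by (auto simp: words_def dest: nth_mem)

lemma shifted_row_left: "j < t \<Longrightarrow> shifted_row v t (s, x) j = x ! j mod v"
  by (simp add: shifted_row_def)

lemma shifted_row_right: "j < t \<Longrightarrow> shifted_row v t (s, x) (j + t) = (x ! j + s) mod v"
  by (simp add: shifted_row_def div_add_self2)

lemma shifted_row_less: "0 < v \<Longrightarrow> shifted_row v t p j < v"
  by (simp add: shifted_row_def)

lemma ex_shifted_row_covers:
  assumes "i \<le> t" "xs \<in> words v t" "s < v"
  shows "\<exists>x \<in> words v t. covers (shifted_row v t (s, x)) (i, xs)"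
proof -
  \<comment> \<open>window entries in columns \<ge> t are read with the shift s added, so x stores them shifted by v - s\<close>
  define x where
    "x = map (\<lambda>q. if i \<le> q then xs ! (q - i) else (xs ! (q + t - i) + (v - s)) mod v) [0..<t]"
  have "x \<in> words v t"
    using assms words_nth_less[OF assms(2)] by (auto simp: x_def words_def)
  moreover have "shifted_row v t (s, x) (i + p) = xs ! p" if "p < t" for p
  proof (cases "i + p < t")
    case True
    then show ?thesis
      using shifted_row_left words_nth_less[OF assms(2) that] by (simp add: x_def)
  next
    case False
    define q where "q = i + p - t"
    have q: "i + p = q + t" "q < i" "q + t - i = p"
      using False \<open>p < t\<close> unfolding q_def by arith+
    then have "x ! q = (xs ! p + (v - s)) mod v"
      using assms(1) by (simp add: x_def)
    then have "shifted_row v t (s, x) (i + p) = ((xs ! p + (v - s)) mod v + s) mod v"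
      using q(1,2) assms(1) shifted_row_right[of q t v s x] by simp
    also have "\<dots> = xs ! p"
      using assms(3) words_nth_less[OF assms(2) that] by (simp add: mod_add_left_eq)
    finally show ?thesis .
  qed
  ultimately show ?thesis using assms(2) by (auto simp: covers_def words_def)
qed

lemma shifted_rows_eq_if_agree_on_window:
  assumes "i < t" "x \<in> words v t" "x' \<in> words v t" "s < v" "s' < v"
    and agree: "\<And>j. i \<le> j \<Longrightarrow> j \<le> i + t \<Longrightarrow> shifted_row v t (s, x) j = shifted_row v t (s', x') j"
  shows "(s, x) = (s', x')"
proof -
  have nth_x: "x ! q < v" "x' ! q < v" if "q < t" for q
    using words_nth_less assms(2,3) that by auto
  have right: "[x ! q + s = x' ! q + s'] (mod v)" if "q < t" "i \<le> q + t" "q \<le> i" for q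
    using agree[of "q + t"] that shifted_row_right by (simp add: cong_def)
  have "x ! i = x' ! i"
    using agree[of i] assms(1) shifted_row_left nth_x by simp
  then have "s = s'"
    using right[of i] assms(1,4,5) cong_less_modulus_unique_nat
    by (simp add: cong_add_lcancel_nat)
  have "x ! q = x' ! q" if "q < t" for q
  proof (cases "i \<le> q")
    case True
    then show ?thesis using agree[of q] that shifted_row_left nth_x by simp
  next
    case False
    then show ?thesis
      using right[of q] assms(1) that \<open>s = s'\<close> nth_x cong_less_modulus_unique_nat
      by (simp add: cong_add_rcancel_nat)
  qed
  then have "x = x'" using assms(2,3) by (intro nth_equalityI) (auto simp: words_def)
  with \<open>s = s'\<close> show ?thesis by simp
qed

lemma shifted_rows_eq_if_cover_two:
  assumes T: "T \<in> cons_interactions (2 * t) t {0..<v}"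
    and T': "T' \<in> cons_interactions (2 * t) t {0..<v}"
    and "T \<noteq> T'" and p: "p \<in> {0..<v} \<times> words v t" and p': "p' \<in> {0..<v} \<times> words v t"
    and cov: "covers (shifted_row v t p) T" "covers (shifted_row v t p) T'"
      "covers (shifted_row v t p') T" "covers (shifted_row v t p') T'"
  shows "p = p'"
proof -
  obtain i xs i' xs' where ii: "T = (i, xs)" "T' = (i', xs')"
    and lens: "i \<le> t" "i' \<le> t" "length xs = t" "length xs' = t"
    using T T' by (cases T, cases T') (auto simp: cons_interactions_def)
  have "i \<noteq> i'"
  proof
    assume "i = i'"
    then have "xs = xs'"
      using covers_same_start_eq[of "shifted_row v t p" i xs xs'] cov(1,2) ii lens by simp
    with \<open>i = i'\<close> \<open>T \<noteq> T'\<close> ii show False by simp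
  qed
  have agree: "shifted_row v t p j = shifted_row v t p' j" if "l \<le> j" "j < l + t" "l \<in> {i, i'}" for l j
    using covers_agree[of _ l _ _ j] cov ii lens that by auto
  have eq_if_ordered: "p = p'" if "l < l'" "l' \<le> t" "l \<in> {i, i'}" "l' \<in> {i, i'}" for l l'
  proof -
    have "shifted_row v t p j = shifted_row v t p' j" if "l \<le> j" "j \<le> l + t" for j
    proof (cases "j < l + t")
      case True
      then show ?thesis using agree \<open>l \<le> j\<close> \<open>l \<in> {i, i'}\<close> by blast
    next
      case False
      then have "l' \<le> j" "j < l' + t" using \<open>l < l'\<close> \<open>l' \<le> t\<close> that(2) by linarith+
      then show ?thesis using agree \<open>l' \<in> {i, i'}\<close> by blast
    qed
    moreover have "l < t" using that(1,2) by simp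
    moreover obtain s x s' x' where "p = (s, x)" "p' = (s', x')" by fastforce
    ultimately show ?thesis
      using shifted_rows_eq_if_agree_on_window[of l t x v x' s s'] p p' by simp
  qed
  show ?thesis
  proof (cases "i < i'")
    case True
    then show ?thesis using eq_if_ordered[of i i'] lens by simp
  next
    case False
    then have "i' < i" using \<open>i \<noteq> i'\<close> by simp
    then show ?thesis using eq_if_ordered[of i' i] lens by simp
  qed
qed

lemma shifted_rows_covering_card_gt:
  assumes "d < v" "T \<in> cons_interactions (2 * t) t {0..<v}"
  shows "d < card {p \<in> {0..<d+1} \<times> words v t. covers (shifted_row v t p) T}"
proof -
  obtain i xs where T: "T = (i, xs)" "i \<le> t" "xs \<in> words v t"
    using assms(2) by (cases T) (auto simp: cons_interactions_def words_def)
  have "\<forall>s\<in>{0..<d+1}. \<exists>x\<in>words v t. covers (shifted_row v t (s, x)) T"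
    using ex_shifted_row_covers T assms(1) by simp
  then obtain g where
    g: "\<And>s. s \<in> {0..<d+1} \<Longrightarrow> g s \<in> words v t \<and> covers (shifted_row v t (s, g s)) T"
    by metis
  have "card {0..<d+1} \<le> card {p \<in> {0..<d+1} \<times> words v t. covers (shifted_row v t p) T}"
    by (rule card_inj_on_le[of "\<lambda>s. (s, g s)"]) (use g in \<open>auto intro: inj_onI simp: finite_words\<close>)
  then show ?thesis by simp
qed

lemma shifted_rows_covering_two_card_le_1:
  assumes "T \<in> cons_interactions (2 * t) t {0..<v}" "T' \<in> cons_interactions (2 * t) t {0..<v}"
    "T \<noteq> T'" "P \<subseteq> {0..<v} \<times> words v t"
  shows "card {p \<in> P. covers (shifted_row v t p) T \<and> covers (shifted_row v t p) T'} \<le> 1"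
proof -
  have "finite P" using finite_subset[OF assms(4)] finite_words by simp
  then show ?thesis
    unfolding One_nat_def
    using shifted_rows_eq_if_cover_two[OF assms(1-3)] assms(4)
    by (subst card_le_Suc0_iff_eq) (simp, blast)
qed

theorem mainTheorem8:
  fixes t v d :: nat
  assumes "t \<ge> 2" and "v \<ge> 2" and "d \<ge> 1" and "d + 1 \<le> v"
  shows "\<exists>A :: nat \<Rightarrow> nat \<Rightarrow> nat. is_CDA d t ((d + 1) * v ^ t) (2 * t) {0..<v} A"
proof (rule is_CDA_from_labelled_rows)
  let ?P = "{0..<d+1} \<times> words v t"
  show "finite ?P" by (simp add: finite_words)
  show "card ?P = (d + 1) * v ^ t" by (simp add: card_cartesian_product card_words)
  show "shifted_row v t p j \<in> {0..<v}" for p j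
    using shifted_row_less assms(2) by simp
  show "d < card {p \<in> ?P. covers (shifted_row v t p) T}"
    if "T \<in> cons_interactions (2 * t) t {0..<v}" for T
    using shifted_rows_covering_card_gt assms(4) that by simp
  show "card {p \<in> ?P. covers (shifted_row v t p) T \<and> covers (shifted_row v t p) T'} \<le> 1"
    if "T \<in> cons_interactions (2 * t) t {0..<v}" "T' \<in> cons_interactions (2 * t) t {0..<v}" "T \<noteq> T'"
    for T T'
    by (rule shifted_rows_covering_two_card_le_1[OF that]) (use assms(4) in auto)
qed

end
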